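(* Let $(X,S)$ be an $S$-metric space and $r\ge0$. If a sequence $\{x_n\}$ in $X$ is statistically convergent to $x'\in X$, then $st\text{-}LIM^r x_n=B_S[x',r]$.
   Context: An $S$-metric on a nonempty set $X$ is a function $S:X^3\to[0,\infty)$ such that for all $x,y,z,a\in X$: $S(x,y,z)=0$ if and only if $x=y=z$, and $S(x,y,z)\le S(x,x,a)+S(y,y,a)+S(z,z,a)$. $B_S[x,r]=\{y\in X: S(y,y,x)\le r\}$. For $B\subset\mathbb N$ the natural density is $\delta(B)=\lim_{n\to\infty}\frac{|\{k\in B:k\le n\}|}{n}$ when the limit exists. $\{x_n\}$ is statistically convergent to $x'$ if for every $\varepsilon>0$, $\delta(\{n: S(x_n,x_n,x')\ge\varepsilon\})=0$. For $r\ge0$, $\{x_n\}$ is $r$-statistically convergent to $x$ if for every $\varepsilon>0$, $\delta(\{n\in\mathbb N: S(x_n,x_n,x)\ge r+\varepsilon\})=0$; $st\text{-}LIM^r x_n$ denotes the set of all such $x\in X$. *)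

theory Defs
  imports "HOL-Analysis.Analysis"
begin

definition S_metric :: "'a set \<Rightarrow> ('a \<Rightarrow> 'a \<Rightarrow> 'a \<Rightarrow> real) \<Rightarrow> bool" where
  "S_metric X S \<longleftrightarrow> X \<noteq> {} \<and>
     (\<forall>x\<in>X. \<forall>y\<in>X. \<forall>z\<in>X. S x y z \<ge> 0) \<and>
     (\<forall>x\<in>X. \<forall>y\<in>X. \<forall>z\<in>X. S x y z = 0 \<longleftrightarrow> x = y \<and> y = z) \<and>
     (\<forall>x\<in>X. \<forall>y\<in>X. \<forall>z\<in>X. \<forall>a\<in>X. S x y z \<le> S x x a + S y y a + S z z a)"

definition S_closed_ball :: "'a set \<Rightarrow> ('a \<Rightarrow> 'a \<Rightarrow> 'a \<Rightarrow> real) \<Rightarrow> 'a \<Rightarrow> real \<Rightarrow> 'a set" where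
  "S_closed_ball X S x r = {y \<in> X. S y y x \<le> r}"

definition has_natural_density :: "nat set \<Rightarrow> real \<Rightarrow> bool" where
  "has_natural_density B d \<longleftrightarrow>
     ((\<lambda>n. real (card {k \<in> B. 1 \<le> k \<and> k \<le> n}) / real n) \<longlongrightarrow> d) sequentially"

definition stat_convergent :: "('a \<Rightarrow> 'a \<Rightarrow> 'a \<Rightarrow> real) \<Rightarrow> (nat \<Rightarrow> 'a) \<Rightarrow> 'a \<Rightarrow> bool" where
  "stat_convergent S x x' \<longleftrightarrow>
     (\<forall>\<epsilon>>0. has_natural_density {n. 1 \<le> n \<and> S (x n) (x n) x' \<ge> \<epsilon>} 0)"

definition r_stat_convergent :: "('a \<Rightarrow> 'a \<Rightarrow> 'a \<Rightarrow> real) \<Rightarrow> real \<Rightarrow> (nat \<Rightarrow> 'a) \<Rightarrow> 'a \<Rightarrow> bool" where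
  "r_stat_convergent S r x y \<longleftrightarrow>
     (\<forall>\<epsilon>>0. has_natural_density {n. 1 \<le> n \<and> S (x n) (x n) y \<ge> r + \<epsilon>} 0)"

definition st_LIM :: "'a set \<Rightarrow> ('a \<Rightarrow> 'a \<Rightarrow> 'a \<Rightarrow> real) \<Rightarrow> real \<Rightarrow> (nat \<Rightarrow> 'a) \<Rightarrow> 'a set" where
  "st_LIM X S r x = {y \<in> X. r_stat_convergent S r x y}"

end

theory Submission
  imports Defs
begin

text \<open>
  Both inclusions rest on the estimate \<open>S a a c \<le> 2 S a a b + S c c b\<close>, the triangle
  inequality with centre \<open>b\<close>, together with the symmetry \<open>S a a b = S b b a\<close>.
  If \<open>S y y x' \<le> r\<close>, then \<open>S (x n) (x n) y \<ge> r + \<epsilon>\<close> forces \<open>S (x n) (x n) x' \<ge> \<epsilon>/2\<close>, so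
  the exceptional indices for \<open>y\<close> lie in a set of density zero.  Conversely, if \<open>y\<close> is an
  \<open>r\<close>-statistical limit, two sets of density zero cannot cover all indices, so some \<open>x n\<close>
  is \<open>\<epsilon>\<close>-close to \<open>x'\<close> and \<open>(r + \<epsilon>)\<close>-close to \<open>y\<close>, whence \<open>S y y x' < r + 3\<epsilon>\<close>.
\<close>

lemma has_natural_density_zero_subset:
  assumes "has_natural_density B 0" and "A \<subseteq> B"
  shows "has_natural_density A 0"
  unfolding has_natural_density_def
proof (rule tendsto_sandwich[where f = "\<lambda>n. 0"])
  let ?d = "\<lambda>C n. real (card {k \<in> C. 1 \<le> k \<and> k \<le> n}) / real n"
  have "card {k \<in> A. 1 \<le> k \<and> k \<le> n} \<le> card {k \<in> B. 1 \<le> k \<and> k \<le> n}" for n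
    using assms(2) by (intro card_mono) auto
  then have "?d A n \<le> ?d B n" for n
    by (simp add: divide_right_mono)
  then show "\<forall>\<^sub>F n in sequentially. ?d A n \<le> ?d B n"
    by (intro always_eventually allI)
qed (use assms(1) in \<open>simp_all add: has_natural_density_def\<close>)

lemma has_natural_density_zero_Un:
  assumes "has_natural_density A 0" and "has_natural_density B 0"
  shows "has_natural_density (A \<union> B) 0"
  unfolding has_natural_density_def
proof (rule tendsto_sandwich[where f = "\<lambda>n. 0"])
  let ?d = "\<lambda>C n. real (card {k \<in> C. 1 \<le> k \<and> k \<le> n}) / real n"
  have "?d (A \<union> B) n \<le> ?d A n + ?d B n" for n
  proof -
    have "{k \<in> A \<union> B. 1 \<le> k \<and> k \<le> n}
        = {k \<in> A. 1 \<le> k \<and> k \<le> n} \<union> {k \<in> B. 1 \<le> k \<and> k \<le> n}"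
      by auto
    then have "card {k \<in> A \<union> B. 1 \<le> k \<and> k \<le> n}
        \<le> card {k \<in> A. 1 \<le> k \<and> k \<le> n} + card {k \<in> B. 1 \<le> k \<and> k \<le> n}"
      by (simp only: card_Un_le)
    then show ?thesis
      by (simp add: divide_right_mono flip: add_divide_distrib)
  qed
  then show "\<forall>\<^sub>F n in sequentially. ?d (A \<union> B) n \<le> ?d A n + ?d B n"
    by (intro always_eventually allI)
  show "(\<lambda>n. ?d A n + ?d B n) \<longlonglongrightarrow> 0"
    using tendsto_add[OF assms[unfolded has_natural_density_def]] by simp
qed simp_all

lemma has_natural_density_zero_obtains_notin:
  assumes "has_natural_density A 0"
  obtains n where "n \<ge> 1" and "n \<notin> A"
proof (rule ccontr)
  assume "\<not> thesis"
  with that have "n \<in> A" if "n \<ge> 1" for n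
    using \<open>n \<ge> 1\<close> by blast
  then have "{k \<in> A. 1 \<le> k \<and> k \<le> n} = {1..n}" for n
    by auto
  then have "\<forall>\<^sub>F n in sequentially. real (card {k \<in> A. 1 \<le> k \<and> k \<le> n}) / real n = 1"
    by (intro eventually_sequentiallyI[of 1]) simp
  then have "(\<lambda>n. real (card {k \<in> A. 1 \<le> k \<and> k \<le> n}) / real n) \<longlonglongrightarrow> 1"
    by (rule tendsto_eventually)
  moreover have "(\<lambda>n. real (card {k \<in> A. 1 \<le> k \<and> k \<le> n}) / real n) \<longlonglongrightarrow> 0"
    using assms by (simp add: has_natural_density_def)
  ultimately show False
    using LIMSEQ_unique by fastforce
qed

lemma S_metric_triangle:
  assumes "S_metric X S" and "a \<in> X" "b \<in> X" "c \<in> X" "d \<in> X"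
  shows "S a b c \<le> S a a d + S b b d + S c c d"
proof -
  have "\<forall>x\<in>X. \<forall>y\<in>X. \<forall>z\<in>X. \<forall>a\<in>X. S x y z \<le> S x x a + S y y a + S z z a"
    using assms(1) unfolding S_metric_def by (elim conjE)
  then show ?thesis
    using assms(2-5) by blast
qed

lemma S_metric_self:
  assumes "S_metric X S" and "a \<in> X"
  shows "S a a a = 0"
proof -
  have "\<forall>x\<in>X. \<forall>y\<in>X. \<forall>z\<in>X. S x y z = 0 \<longleftrightarrow> x = y \<and> y = z"
    using assms(1) unfolding S_metric_def by (elim conjE)
  then show ?thesis
    using assms(2) by blast
qed

lemma S_metric_sym:
  assumes "S_metric X S" and "a \<in> X" "b \<in> X"
  shows "S a a b = S b b a"
proof -
  have "S a a b \<le> S b b a" if "a \<in> X" "b \<in> X" for a b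
    using S_metric_triangle[OF assms(1) that(1,1,2,1)] S_metric_self[OF assms(1) that(1)]
    by simp
  with assms show ?thesis
    by (simp add: order_antisym)
qed

lemma S_metric_triangle_centre:
  assumes "S_metric X S" and "a \<in> X" "b \<in> X" "c \<in> X"
  shows "S a a c \<le> 2 * S a a b + S c c b"
  using S_metric_triangle[OF assms(1,2,2,4,3)] by simp

lemma S_closed_ball_subset_st_LIM:
  assumes "S_metric X S" and "\<And>n. x n \<in> X" and "x' \<in> X"
    and "stat_convergent S x x'"
  shows "S_closed_ball X S x' r \<subseteq> st_LIM X S r x"
proof
  fix y
  assume "y \<in> S_closed_ball X S x' r"
  then have y: "y \<in> X" "S y y x' \<le> r"
    by (auto simp: S_closed_ball_def)
  have "has_natural_density {n. 1 \<le> n \<and> S (x n) (x n) y \<ge> r + \<epsilon>} 0" if "\<epsilon> > 0" for \<epsilon>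
  proof (rule has_natural_density_zero_subset)
    show "has_natural_density {n. 1 \<le> n \<and> S (x n) (x n) x' \<ge> \<epsilon> / 2} 0"
      using assms(4) half_gt_zero[OF \<open>\<epsilon> > 0\<close>] unfolding stat_convergent_def by blast
    show "{n. 1 \<le> n \<and> S (x n) (x n) y \<ge> r + \<epsilon>} \<subseteq> {n. 1 \<le> n \<and> S (x n) (x n) x' \<ge> \<epsilon> / 2}"
    proof safe
      fix n
      assume "1 \<le> n" and "r + \<epsilon> \<le> S (x n) (x n) y"
      with S_metric_triangle_centre[OF assms(1) assms(2)[of n] assms(3) y(1)] y(2)
      show "\<epsilon> / 2 \<le> S (x n) (x n) x'"
        by linarith
    qed
  qed
  with y(1) show "y \<in> st_LIM X S r x"
    by (simp add: st_LIM_def r_stat_convergent_def)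
qed

lemma st_LIM_subset_S_closed_ball:
  assumes "S_metric X S" and "\<And>n. x n \<in> X" and "x' \<in> X"
    and "stat_convergent S x x'"
  shows "st_LIM X S r x \<subseteq> S_closed_ball X S x' r"
proof
  fix y
  assume "y \<in> st_LIM X S r x"
  then have y: "y \<in> X" "r_stat_convergent S r x y"
    by (auto simp: st_LIM_def)
  have "S y y x' \<le> r + \<epsilon>" if "\<epsilon> > 0" for \<epsilon>
  proof -
    define \<delta> where "\<delta> = \<epsilon> / 3"
    have "\<delta> > 0"
      using that by (simp add: \<delta>_def)
    with assms(4) y(2) have "has_natural_density ({n. 1 \<le> n \<and> S (x n) (x n) x' \<ge> \<delta>}
        \<union> {n. 1 \<le> n \<and> S (x n) (x n) y \<ge> r + \<delta>}) 0"
      unfolding stat_convergent_def r_stat_convergent_def by (blast intro: has_natural_density_zero_Un)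
    then obtain n where "n \<ge> 1" "n \<notin> {n. 1 \<le> n \<and> S (x n) (x n) x' \<ge> \<delta>}
        \<union> {n. 1 \<le> n \<and> S (x n) (x n) y \<ge> r + \<delta>}"
      by (rule has_natural_density_zero_obtains_notin)
    then have "S (x n) (x n) x' < \<delta>" and "S (x n) (x n) y < r + \<delta>"
      by auto
    moreover have "S x' x' y \<le> 2 * S x' x' (x n) + S y y (x n)"
      using S_metric_triangle_centre[OF assms(1,3) assms(2)[of n] y(1)] .
    moreover have "S x' x' y = S y y x'" "S x' x' (x n) = S (x n) (x n) x'" "S y y (x n) = S (x n) (x n) y"
      using S_metric_sym[OF assms(1)] assms(2,3) y(1) by blast+
    ultimately show ?thesis
      unfolding \<delta>_def by linarith
  qed
  then have "S y y x' \<le> r"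
    by (rule field_le_epsilon)
  with y(1) show "y \<in> S_closed_ball X S x' r"
    by (simp add: S_closed_ball_def)
qed

theorem theorem4p3:
  fixes X :: "'a set" and S :: "'a \<Rightarrow> 'a \<Rightarrow> 'a \<Rightarrow> real"
    and x :: "nat \<Rightarrow> 'a" and x' :: 'a and r :: real
  assumes "S_metric X S" and "r \<ge> 0"
    and "\<And>n. x n \<in> X" and "x' \<in> X"
    and "stat_convergent S x x'"
  shows "st_LIM X S r x = S_closed_ball X S x' r"
  using st_LIM_subset_S_closed_ball[OF assms(1,3,4,5)] S_closed_ball_subset_st_LIM[OF assms(1,3,4,5)]
  by (rule equalityI)

end
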